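(* Let $0<\beta\le1$ and let $f(z)=z+\sum_{n\ge2}a_nz^n\in\mathcal S^*_{\Sigma,\beta}$. Then $|a_3-a_2^2|\le\beta$.
   Context: Let $\mathbb U=\{z\in\mathbb C:|z|<1\}$; $\Sigma$ is the class of $f(z)=z+\sum_{n\ge2}a_nz^n$ analytic and univalent in $\mathbb U$ whose inverse extends to an analytic univalent function $g=f^{-1}$ on $\mathbb U$. $F\prec G$ means $F=G\circ w$ for some analytic $w:\mathbb U\to\mathbb U$ with $w(0)=0$. $\mathcal S^*_{\Sigma,\beta}$ (strongly bi-starlike of order $\beta$) is the set of $f\in\Sigma$ with $\frac{zf'(z)}{f(z)}\prec\big(\frac{1+z}{1-z}\big)^\beta$ and $\frac{wg'(w)}{g(w)}\prec\big(\frac{1+w}{1-w}\big)^\beta$ (principal power). *)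

theory Defs
  imports "HOL-Analysis.Analysis"
begin

definition unit_disc :: "complex set" where
  "unit_disc = ball 0 1"

definition subordinate :: "(complex \<Rightarrow> complex) \<Rightarrow> (complex \<Rightarrow> complex) \<Rightarrow> bool" where
  "subordinate F G \<longleftrightarrow>
     (\<exists>w. w holomorphic_on unit_disc \<and> w ` unit_disc \<subseteq> unit_disc \<and> w 0 = 0 \<and>
          (\<forall>z\<in>unit_disc. F z = G (w z)))"

definition normalized_univalent :: "(complex \<Rightarrow> complex) \<Rightarrow> bool" where
  "normalized_univalent f \<longleftrightarrow>
     f holomorphic_on unit_disc \<and> inj_on f unit_disc \<and> f 0 = 0 \<and> deriv f 0 = 1"

text \<open>g is an analytic univalent function on U extending the inverse of f
  (i.e. g(f z) = z whenever z and f z lie in U).\<close>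
definition univalent_inverse_extension ::
  "(complex \<Rightarrow> complex) \<Rightarrow> (complex \<Rightarrow> complex) \<Rightarrow> bool" where
  "univalent_inverse_extension f g \<longleftrightarrow>
     g holomorphic_on unit_disc \<and> inj_on g unit_disc \<and>
     (\<forall>z\<in>unit_disc. f z \<in> unit_disc \<longrightarrow> g (f z) = z)"

definition bi_univalent :: "(complex \<Rightarrow> complex) \<Rightarrow> bool" where
  "bi_univalent f \<longleftrightarrow> normalized_univalent f \<and> (\<exists>g. univalent_inverse_extension f g)"

text \<open>The function z h'(z)/h(z), with its removable singularity at 0 filled in
  by the value 1 (h(0)=0, h'(0)=1).\<close>
definition starlike_quot :: "(complex \<Rightarrow> complex) \<Rightarrow> complex \<Rightarrow> complex" where
  "starlike_quot h z = (if z = 0 then 1 else z * deriv h z / h z)"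

definition strong_starlike_majorant :: "real \<Rightarrow> complex \<Rightarrow> complex" where
  "strong_starlike_majorant \<beta> z = ((1 + z) / (1 - z)) powr (of_real \<beta>)"

definition strongly_bi_starlike :: "real \<Rightarrow> (complex \<Rightarrow> complex) \<Rightarrow> bool" where
  "strongly_bi_starlike \<beta> f \<longleftrightarrow>
     normalized_univalent f \<and>
     (\<exists>g. univalent_inverse_extension f g \<and>
          subordinate (starlike_quot f) (strong_starlike_majorant \<beta>) \<and>
          subordinate (starlike_quot g) (strong_starlike_majorant \<beta>))"

definition taylor_coeff :: "(complex \<Rightarrow> complex) \<Rightarrow> nat \<Rightarrow> complex" where
  "taylor_coeff f n = (deriv ^^ n) f 0 / fact n"

end

theory Submission
  imports Defs "HOL-Complex_Analysis.Complex_Analysis"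
begin

(* Write qf = z f'/f and qg = w g'/g for f and its inverse g, and p for the
   majorant ((1+z)/(1-z))^beta.  The proof compares second derivatives at 0:
   1. If F = p o u and G = p o v with Schwarz functions u, v, then
      F''(0) = p''(0) u'(0)^2 + p'(0) u''(0), and likewise for G.  When F'(0) = -G'(0)
      and p'(0) <> 0 the p'' terms cancel, and the Cauchy estimate |u''(0)| <= 2 for
      self-maps of the disc gives |F''(0) - G''(0)| <= 4 |p'(0)|.
   2. From qf * f = z f' one reads off qf'(0) = f''(0)/2 and
      qf''(0) = 2 f'''(0)/3 - f''(0)^2/2.
   3. From g o f = id one gets (qg o f) * qf = 1 near 0, hence qg'(0) = -qf'(0)
      and qg''(0) = f''(0)^2 - qf''(0).  Together: a3 - a2^2 = (qf''(0) - qg''(0))/8.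
   4. For the majorant p'(0) = 2 beta, so |a3 - a2^2| <= 8 beta / 8 = beta. *)

lemma deriv_comp_holomorphic:
  assumes "h holomorphic_on T" "open T" "k holomorphic_on S" "open S" "k ` S \<subseteq> T" "z \<in> S"
  shows "deriv (\<lambda>x. h (k x)) z = deriv h (k z) * deriv k z"
proof -
  have "k field_differentiable at z" "h field_differentiable at (k z)"
    using assms holomorphic_on_imp_differentiable_at by blast+
  then show ?thesis using deriv_chain[of k z h] by (simp add: o_def)
qed

lemma second_deriv_comp_holomorphic:
  assumes "h holomorphic_on T" "open T" "k holomorphic_on S" "open S" "k ` S \<subseteq> T" "z \<in> S"
  shows "(deriv ^^ 2) (\<lambda>x. h (k x)) z
           = (deriv ^^ 2) h (k z) * (deriv k z)^2 + deriv h (k z) * (deriv ^^ 2) k z"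
proof -
  have hk: "(\<lambda>x. h (k x)) holomorphic_on S"
    using holomorphic_on_compose_gen[OF assms(3,1,5)] by (simp add: o_def)
  have dh: "deriv h holomorphic_on T" and dk: "deriv k holomorphic_on S"
    using assms holomorphic_deriv by blast+
  have dhk: "(\<lambda>x. deriv h (k x)) holomorphic_on S"
    using holomorphic_deriv_compose[OF assms(1,3,5,2)] .
  have "(deriv ^^ 1) (deriv (\<lambda>x. h (k x))) z = (deriv ^^ 1) (\<lambda>x. deriv h (k x) * deriv k x) z"
    by (rule higher_deriv_transform_within_open[OF holomorphic_deriv[OF hk assms(4)] _ assms(4,6)])
       (intro holomorphic_intros dhk dk, rule deriv_comp_holomorphic[OF assms(1-5)])
  then have "(deriv ^^ 2) (\<lambda>x. h (k x)) z = deriv (\<lambda>x. deriv h (k x) * deriv k x) z"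
    by (simp add: numeral_2_eq_2)
  also have "\<dots> = deriv h (k z) * deriv (deriv k) z + deriv (\<lambda>x. deriv h (k x)) z * deriv k z"
    using dhk dk assms(4,6)
    by (intro deriv_mult holomorphic_on_imp_differentiable_at[of _ S])
  also have "deriv (\<lambda>x. deriv h (k x)) z = deriv (deriv h) (k z) * deriv k z"
    by (rule deriv_comp_holomorphic[OF dh assms(2-6)])
  finally show ?thesis by (simp add: numeral_2_eq_2 power2_eq_square algebra_simps)
qed

text \<open>The Cayley map sends the unit disc into the right half plane, so the principal
  power of it is holomorphic there.\<close>
lemma cayley_Re_pos:
  assumes "cmod z < 1"
  shows "Re ((1 + z) / (1 - z)) > 0"
proof -
  have inside: "(Re z)^2 + (Im z)^2 < 1"
    using assms by (simp add: cmod_def)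
  then have "Re (1+z) * Re (1-z) + Im (1+z) * Im (1-z) > 0"
    by (simp add: power2_eq_square algebra_simps)
  moreover have "(1 - Re z)^2 + (Im z)^2 > 0"
    using inside by (auto simp: sum_power2_gt_zero_iff)
  ultimately show ?thesis
    by (simp add: Re_divide)
qed

lemma strong_starlike_majorant_holomorphic:
  "strong_starlike_majorant \<beta> holomorphic_on unit_disc"
proof -
  have "(1 + z) / (1 - z) \<notin> \<real>\<^sub>\<le>\<^sub>0" if "z \<in> unit_disc" for z
    using cayley_Re_pos[of z] that by (auto simp: unit_disc_def elim!: nonpos_Reals_cases)
  then show ?thesis
    unfolding strong_starlike_majorant_def[abs_def] unit_disc_def
    by (intro holomorphic_intros) (auto simp: unit_disc_def)
qed

lemma strong_starlike_majorant_deriv0: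
  "deriv (strong_starlike_majorant \<beta>) 0 = 2 * of_real \<beta>"
proof -
  have cayley: "((\<lambda>z::complex. (1 + z) / (1 - z)) has_field_derivative 2) (at 0)"
    by (auto intro!: derivative_eq_intros)
  have "((\<lambda>z. ((1 + z) / (1 - z)) powr (complex_of_real \<beta>)) has_field_derivative
          complex_of_real \<beta> * 2) (at 0)"
    using DERIV_chain2[OF has_field_derivative_powr cayley, of "complex_of_real \<beta>"] by simp
  then show ?thesis
    unfolding strong_starlike_majorant_def[abs_def] by (intro DERIV_imp_deriv) (simp add: mult.commute)
qed

text \<open>Cauchy's estimate on every circle of radius \<open>r < 1\<close>, followed by \<open>r \<rightarrow> 1\<close>:
  a holomorphic self-map of the disc satisfies \<open>|(deriv ^^ n) w 0| \<le> n!\<close>.\<close>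
lemma self_map_disc_higher_deriv_bound:
  assumes "w holomorphic_on unit_disc" "w ` unit_disc \<subseteq> unit_disc"
  shows "cmod ((deriv ^^ n) w 0) \<le> fact n"
proof -
  have cauchy: "cmod ((deriv ^^ n) w 0) \<le> fact n / r^n" if r: "0 < r" "r < 1" for r :: real
  proof -
    have sub: "cball 0 r \<subseteq> unit_disc"
      using r by (auto simp: unit_disc_def)
    have "cmod ((deriv ^^ n) w 0) \<le> fact n * 1 / r^n"
    proof (rule Cauchy_inequality)
      show "w holomorphic_on ball 0 r"
        using assms(1) sub ball_subset_cball holomorphic_on_subset by blast
      show "continuous_on (cball 0 r) w"
        using assms(1) sub holomorphic_on_imp_continuous_on continuous_on_subset by blast
      show "cmod (w x) \<le> 1" if "cmod (0 - x) = r" for x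
        using that sub assms(2) by (force simp: unit_disc_def)
    qed (use r in auto)
    then show ?thesis by simp
  qed
  have "((\<lambda>r. fact n / r^n) \<longlongrightarrow> fact n / 1^n) (at_left (1::real))"
    by (intro tendsto_intros) auto
  moreover have "eventually (\<lambda>r. cmod ((deriv ^^ n) w 0) \<le> fact n / r^n) (at_left (1::real))"
  proof -
    have "eventually (\<lambda>r. r \<in> {0<..<1}) (at_left (1::real))"
      by (rule eventually_at_left_real) simp
    then show ?thesis by eventually_elim (auto intro: cauchy)
  qed
  ultimately show ?thesis
    by (intro tendsto_lowerbound) auto
qed

lemma subordinate_derivs:
  assumes p: "p holomorphic_on unit_disc"
    and w: "w holomorphic_on unit_disc" "w ` unit_disc \<subseteq> unit_disc" "w 0 = 0"
    and F: "\<forall>z\<in>unit_disc. F z = p (w z)"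
  shows "F holomorphic_on unit_disc" "deriv F 0 = deriv p 0 * deriv w 0"
    "(deriv ^^ 2) F 0 = (deriv ^^ 2) p 0 * (deriv w 0)^2 + deriv p 0 * (deriv ^^ 2) w 0"
proof -
  have D: "open unit_disc" "0 \<in> unit_disc" by (auto simp: unit_disc_def)
  have pw: "(\<lambda>z. p (w z)) holomorphic_on unit_disc"
    using holomorphic_on_compose_gen[OF w(1) p w(2)] by (simp add: o_def)
  show FH: "F holomorphic_on unit_disc"
    using holomorphic_transform[OF pw] F by auto
  have same: "(deriv ^^ n) F 0 = (deriv ^^ n) (\<lambda>z. p (w z)) 0" for n
    by (rule higher_deriv_transform_within_open[OF FH pw D]) (use F in auto)
  show "deriv F 0 = deriv p 0 * deriv w 0"
    using same[of 1] deriv_comp_holomorphic[OF p D(1) w(1) D(1) w(2) D(2)] w(3) by simp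
  show "(deriv ^^ 2) F 0 = (deriv ^^ 2) p 0 * (deriv w 0)^2 + deriv p 0 * (deriv ^^ 2) w 0"
    using same[of 2] second_deriv_comp_holomorphic[OF p D(1) w(1) D(1) w(2) D(2)] w(3) by simp
qed

lemma subordinate_holomorphic:
  assumes "p holomorphic_on unit_disc" "subordinate F p"
  shows "F holomorphic_on unit_disc"
  using assms subordinate_derivs(1) unfolding subordinate_def by metis

lemma subordinate_pair_second_deriv_bound:
  assumes p: "p holomorphic_on unit_disc" "deriv p 0 \<noteq> 0"
    and sub: "subordinate F p" "subordinate G p"
    and opposite: "deriv F 0 = - deriv G 0"
  shows "cmod ((deriv ^^ 2) F 0 - (deriv ^^ 2) G 0) \<le> 4 * cmod (deriv p 0)"
proof -
  obtain u where u: "u holomorphic_on unit_disc" "u ` unit_disc \<subseteq> unit_disc" "u 0 = 0"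
      "\<forall>z\<in>unit_disc. F z = p (u z)"
    using sub(1) unfolding subordinate_def by blast
  obtain v where v: "v holomorphic_on unit_disc" "v ` unit_disc \<subseteq> unit_disc" "v 0 = 0"
      "\<forall>z\<in>unit_disc. G z = p (v z)"
    using sub(2) unfolding subordinate_def by blast
  note dF = subordinate_derivs[OF p(1) u] and dG = subordinate_derivs[OF p(1) v]
  have "deriv p 0 * deriv u 0 = deriv p 0 * (- deriv v 0)"
    using opposite dF(2) dG(2) by simp
  then have "deriv u 0 = - deriv v 0"
    by (simp only: mult_left_cancel[OF p(2)])
  then have "(deriv ^^ 2) F 0 - (deriv ^^ 2) G 0 = deriv p 0 * ((deriv ^^ 2) u 0 - (deriv ^^ 2) v 0)"
    using dF(3) dG(3) by (simp add: algebra_simps)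
  moreover have "cmod ((deriv ^^ 2) u 0 - (deriv ^^ 2) v 0) \<le> 2 + 2"
    using self_map_disc_higher_deriv_bound[OF u(1,2), of 2]
      self_map_disc_higher_deriv_bound[OF v(1,2), of 2]
      norm_triangle_ineq4[of "(deriv ^^ 2) u 0" "(deriv ^^ 2) v 0"]
    by (simp add: fact_numeral)
  ultimately show ?thesis
    by (simp add: norm_mult) (metis mult.commute mult_left_mono norm_ge_zero)
qed

text \<open>Differentiating \<open>q(z) f(z) = z f'(z)\<close> twice and three times at 0, where
  \<open>q = z f'/f\<close> and \<open>f(0) = 0\<close>, \<open>f'(0) = 1\<close>.\<close>
lemma starlike_quot_derivs:
  assumes f: "f holomorphic_on S" "open S" "0 \<in> S" "f 0 = 0" "deriv f 0 = 1"
    and nonzero: "\<And>z. z \<in> S \<Longrightarrow> z \<noteq> 0 \<Longrightarrow> f z \<noteq> 0"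
    and q: "starlike_quot f holomorphic_on S"
  shows "deriv (starlike_quot f) 0 = (deriv ^^ 2) f 0 / 2"
    "(deriv ^^ 2) (starlike_quot f) 0 = 2 * (deriv ^^ 3) f 0 / 3 - ((deriv ^^ 2) f 0)^2 / 2"
proof -
  let ?q = "starlike_quot f"
  have q0: "?q 0 = 1" by (simp add: starlike_quot_def)
  have df: "deriv f holomorphic_on S" using f(1,2) by (rule holomorphic_deriv)
  have shift: "(deriv ^^ i) (deriv f) = (deriv ^^ Suc i) f" for i
    by (metis funpow_Suc_right comp_apply)
  have "?q z * f z = z * deriv f z" if "z \<in> S" for z
    using nonzero[OF that] f(4) by (cases "z = 0") (auto simp: starlike_quot_def)
  then have same: "(deriv ^^ n) (\<lambda>z. ?q z * f z) 0 = (deriv ^^ n) (\<lambda>z. z * deriv f z) 0" for n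
    by (intro higher_deriv_transform_within_open[OF _ _ f(2,3)])
       (auto intro!: holomorphic_intros q f(1) df)
  note lhs = higher_deriv_mult[OF q f(1,2,3)]
    and rhs = higher_deriv_mult[OF holomorphic_on_ident df f(2,3)]
  have "(deriv ^^ 2) f 0 + 2 * deriv ?q 0 = 2 * (deriv ^^ 2) f 0"
    using same[of 2] unfolding lhs rhs shift by (simp add: numeral_2_eq_2 f(4,5) q0)
  then show q1: "deriv ?q 0 = (deriv ^^ 2) f 0 / 2"
    by (simp add: field_simps)
  have "(deriv ^^ 3) f 0 + 3 * deriv ?q 0 * (deriv ^^ 2) f 0 + 3 * (deriv ^^ 2) ?q 0
          = 3 * (deriv ^^ 3) f 0"
    using same[of 3] unfolding lhs rhs shift
    by (simp add: numeral_3_eq_3 numeral_2_eq_2 f(4,5) q0)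
  then show "(deriv ^^ 2) ?q 0 = 2 * (deriv ^^ 3) f 0 / 3 - ((deriv ^^ 2) f 0)^2 / 2"
    unfolding q1 by (simp add: field_simps power2_eq_square)
qed

text \<open>Where \<open>g \<circ> f = id\<close>, the chain rule gives \<open>g'(f z) f'(z) = 1\<close>, and hence the
  starlikeness quotients are reciprocal: \<open>qg(f z) qf(z) = 1\<close>.\<close>
lemma starlike_quot_inverse:
  assumes f: "f holomorphic_on S" "open S" "f 0 = 0"
    and nonzero: "\<And>z. z \<in> S \<Longrightarrow> z \<noteq> 0 \<Longrightarrow> f z \<noteq> 0"
    and g: "g holomorphic_on T" "open T" "f ` S \<subseteq> T"
    and inverse: "\<And>z. z \<in> S \<Longrightarrow> g (f z) = z"
    and z: "z \<in> S"
  shows "starlike_quot g (f z) * starlike_quot f z = 1"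
proof (cases "z = 0")
  case True
  then show ?thesis by (simp add: f(3) starlike_quot_def)
next
  case False
  have gf: "(\<lambda>z. g (f z)) holomorphic_on S"
    using holomorphic_on_compose_gen[OF f(1) g(1,3)] by (simp add: o_def)
  have "(deriv ^^ 1) (\<lambda>z. g (f z)) z = (deriv ^^ 1) (\<lambda>z. z) z"
    by (rule higher_deriv_transform_within_open[OF gf holomorphic_on_ident f(2) z]) (rule inverse)
  then have "deriv g (f z) * deriv f z = 1"
    using deriv_comp_holomorphic[OF g(1,2) f(1,2) g(3) z] by simp
  then show ?thesis
    using nonzero[OF z False] False inverse[OF z]
    by (auto simp: starlike_quot_def field_simps)
qed

text \<open>Differentiating \<open>qg(f z) qf(z) = 1\<close> at 0 expresses the derivatives of \<open>qg\<close> through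
  those of \<open>qf\<close> and \<open>f\<close>.\<close>
lemma inverse_starlike_quot_derivs:
  assumes f: "f holomorphic_on D" "open D" "0 \<in> D" "f 0 = 0" "deriv f 0 = 1"
    and nonzero: "\<And>z. z \<in> D \<Longrightarrow> z \<noteq> 0 \<Longrightarrow> f z \<noteq> 0"
    and g: "g holomorphic_on D" "\<And>z. z \<in> D \<Longrightarrow> f z \<in> D \<Longrightarrow> g (f z) = z"
    and q: "starlike_quot f holomorphic_on D" "starlike_quot g holomorphic_on D"
  shows "deriv (starlike_quot g) 0 = - deriv (starlike_quot f) 0"
    "(deriv ^^ 2) (starlike_quot g) 0 = ((deriv ^^ 2) f 0)^2 - (deriv ^^ 2) (starlike_quot f) 0"
proof -
  let ?qf = "starlike_quot f" and ?qg = "starlike_quot g"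
  define S where "S = D \<inter> f -` D"
  have S: "open S" "0 \<in> S" "S \<subseteq> D" "f ` S \<subseteq> D"
    using continuous_open_preimage[OF holomorphic_on_imp_continuous_on[OF f(1)] f(2) f(2)] f(3,4)
    by (auto simp: S_def)
  have fS: "f holomorphic_on S" and qfS: "?qf holomorphic_on S"
    using f(1) q(1) S(3) holomorphic_on_subset by blast+
  define H where "H = (\<lambda>z. ?qg (f z))"
  have H: "H holomorphic_on S"
    using holomorphic_on_compose_gen[OF fS q(2) S(4)] by (simp add: o_def H_def)
  have "H z * ?qf z = 1" if "z \<in> S" for z
    unfolding H_def
    by (rule starlike_quot_inverse[OF fS S(1) f(4) _ g(1) f(2) S(4) _ that])
       (use nonzero g(2) S(3) in \<open>auto simp: S_def\<close>)
  then have same: "(deriv ^^ n) (\<lambda>z. H z * ?qf z) 0 = (deriv ^^ n) (\<lambda>z. 1) 0" for n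
    by (intro higher_deriv_transform_within_open[OF _ _ S(1,2)]) (auto intro!: holomorphic_intros H qfS)
  note prod = higher_deriv_mult[OF H qfS S(1,2)]
  have H0: "H 0 = 1" and qf0: "?qf 0 = 1"
    by (simp_all add: H_def f(4) starlike_quot_def)
  have H1: "deriv H 0 = deriv ?qg 0"
    using deriv_comp_holomorphic[OF q(2) f(2) fS S(1,4,2)] by (simp add: H_def f(4,5))
  have H2: "(deriv ^^ 2) H 0 = (deriv ^^ 2) ?qg 0 + deriv ?qg 0 * (deriv ^^ 2) f 0"
    using second_deriv_comp_holomorphic[OF q(2) f(2) fS S(1,4,2)] by (simp add: H_def f(4,5))
  have "deriv H 0 + deriv ?qf 0 = 0"
    using same[of 1] unfolding prod by (simp add: H0 qf0 add.commute)
  then show qg1: "deriv ?qg 0 = - deriv ?qf 0"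
    unfolding H1 by (simp add: eq_neg_iff_add_eq_0)
  have "(deriv ^^ 2) H 0 + 2 * deriv H 0 * deriv ?qf 0 + (deriv ^^ 2) ?qf 0 = 0"
    using same[of 2] unfolding prod by (simp add: numeral_2_eq_2 H0 qf0 algebra_simps)
  then show "(deriv ^^ 2) ?qg 0 = ((deriv ^^ 2) f 0)^2 - (deriv ^^ 2) ?qf 0"
    unfolding H1 H2 qg1 using starlike_quot_derivs(1)[OF f nonzero q(1)]
    by algebra
qed

lemma bi_univalent_coeff_functional:
  assumes f: "normalized_univalent f" and g: "univalent_inverse_extension f g"
    and q: "starlike_quot f holomorphic_on unit_disc" "starlike_quot g holomorphic_on unit_disc"
  shows "deriv (starlike_quot f) 0 = - deriv (starlike_quot g) 0"
    "taylor_coeff f 3 - (taylor_coeff f 2)\<^sup>2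
       = ((deriv ^^ 2) (starlike_quot f) 0 - (deriv ^^ 2) (starlike_quot g) 0) / 8"
proof -
  have D: "open unit_disc" "0 \<in> unit_disc" by (auto simp: unit_disc_def)
  have f': "f holomorphic_on unit_disc" "inj_on f unit_disc" "f 0 = 0" "deriv f 0 = 1"
    using f by (auto simp: normalized_univalent_def)
  have nonzero: "f z \<noteq> 0" if "z \<in> unit_disc" "z \<noteq> 0" for z
    using f'(2,3) D(2) that by (metis inj_on_def)
  have g': "g holomorphic_on unit_disc" "\<And>z. z \<in> unit_disc \<Longrightarrow> f z \<in> unit_disc \<Longrightarrow> g (f z) = z"
    using g by (auto simp: univalent_inverse_extension_def)
  note qf = starlike_quot_derivs[OF f'(1) D f'(3,4) nonzero q(1)]
    and qg = inverse_starlike_quot_derivs[OF f'(1) D f'(3,4) nonzero g' q]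
  show "deriv (starlike_quot f) 0 = - deriv (starlike_quot g) 0"
    using qg(1) by simp
  show "taylor_coeff f 3 - (taylor_coeff f 2)\<^sup>2
          = ((deriv ^^ 2) (starlike_quot f) 0 - (deriv ^^ 2) (starlike_quot g) 0) / 8"
    unfolding taylor_coeff_def using qf(2) qg(2) by (simp add: fact_numeral power_divide)
qed

theorem corollary3p13:
  fixes f :: "complex \<Rightarrow> complex" and \<beta> :: real
  assumes "0 < \<beta>" and "\<beta> \<le> 1"
    and "strongly_bi_starlike \<beta> f"
  shows "cmod (taylor_coeff f 3 - (taylor_coeff f 2)\<^sup>2) \<le> \<beta>"
proof -
  let ?p = "strong_starlike_majorant \<beta>"
  obtain g where f: "normalized_univalent f" and g: "univalent_inverse_extension f g"
    and sub: "subordinate (starlike_quot f) ?p" "subordinate (starlike_quot g) ?p"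
    using assms(3) unfolding strongly_bi_starlike_def by blast
  have p: "?p holomorphic_on unit_disc" "deriv ?p 0 = 2 * of_real \<beta>"
    by (rule strong_starlike_majorant_holomorphic, rule strong_starlike_majorant_deriv0)
  note functional = bi_univalent_coeff_functional[OF f g
      subordinate_holomorphic[OF p(1) sub(1)] subordinate_holomorphic[OF p(1) sub(2)]]
  have "cmod ((deriv ^^ 2) (starlike_quot f) 0 - (deriv ^^ 2) (starlike_quot g) 0)
          \<le> 4 * cmod (deriv ?p 0)"
    using assms(1) p by (intro subordinate_pair_second_deriv_bound sub functional(1)) auto
  also have "\<dots> = 8 * \<beta>"
    using assms(1) by (simp add: p(2) norm_mult)
  finally show ?thesis
    unfolding functional(2) by (simp add: norm_divide)
qed

end
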